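(* Under the standing assumptions and definitions in the context, let $\mathbf{x}^*\in\Gamma$ be a fixed point of the convex feasible set iteration, i.e., $\mathbf{x}^*=\arg\min_{\mathbf{x}\in\mathcal{F}(\mathbf{x}^* )}J(\mathbf{x})$. Then $\mathbf{x}^*$ is a strong local optimum of $\min_{\mathbf{x}\in\Gamma}J(\mathbf{x})$, i.e., $\nabla J(\mathbf{x}^* )\cdot v\ge0$ for all $v\in C(\mathbf{x}^* )$.
   Context: Problem: minimize $J(\mathbf{x})$ over $\mathbf{x}\in\Gamma\subset\mathbb{R}^n$, where (i) $J:\mathbb{R}^n\to\mathbb{R}^+$ is smooth and strictly convex; (ii) $\Gamma$ is connected and closed with piecewise smooth, non-self-intersecting boundary, and every point of $\Gamma$ lies in some $n$-dimensional convex polytope contained in $\Gamma$. Semi-convex decomposition: $\Gamma=\bigcap_{i=1}^N\Gamma_i$, $\Gamma_i=\{\mathbf{x}:\phi_i(\mathbf{x})\ge 0\}$, $\partial\Gamma_i=\{\mathbf{x}:\phi_i(\mathbf{x})=0\}$, where each $\phi_i:\mathbb{R}^n\to\mathbb{R}$ is continuous, piecewise smooth and semi-convex: there is a positive semidefinite $H_i^*$ such that $\mathbf{x}\mapsto\phi_i(\mathbf{x})+\frac12(\mathbf{x}-\mathbf{x}_0)^TH_i^*(\mathbf{x}-\mathbf{x}_0)$ is convex for every $\mathbf{x}_0$. One-sided directional derivative: $\partial_v\phi_i(\mathbf{x})=\lim_{a\to0^+}(\phi_i(\mathbf{x}+av)-\phi_i(\mathbf{x}))/a$. Sub-differential: $D\phi_i(\mathbf{x})=\{d\in\mathbb{R}^n: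 d\cdot v\le\partial_v\phi_i(\mathbf{x})\ \forall v\in\mathbb{R}^n\}$. It is assumed that: (1) $D\phi_i(\mathbf{x})\neq\{0\}$ for all $\mathbf{x}$; (2) $0\notin D\phi_i(\mathbf{x})$ if $\mathbf{x}\in\partial\Gamma_i$; (3) for any $\mathbf{x}$ with $I:=\{i:\phi_i(\mathbf{x})=0\}\ne\emptyset$ there is $v$ with $\partial_v\phi_i(\mathbf{x})<0$ for all $i\in I$. Feasible directions and optimal sub-gradients at a reference $\mathbf{x}^r$: a unit vector $v$ is a feasible search direction if for every $i$: $\phi_i(\mathbf{x}^r)>0$; or $\phi_i(\mathbf{x}^r)=0$ and some $d\in D\phi_i(\mathbf{x}^r)$ has $v\cdot d\ge0$; or $\phi_i(\mathbf{x}^r)<0$ and some $d\in D\phi_i(\mathbf{x}^r)$ has $v\cdot d>0$. Let $C(\mathbf{x}^r)$ be the set of these, and $v^*=\arg\min_{v\in C(\mathbf{x}^r)}\nabla J(\mathbf{x}^r)\cdot v$ (ties broken lexicographically by smallest first entry, then second, etc.). Let $DF_i=D\phi_i(\mathbf{x}^r)$ if $\phi_i(\mathbf{x}^r)>0$, $DF_i=\{d\in D\phi_i(\mathbf{x}^r):d\cdot v^*\ge0\}$ if $\phi_i(\mathbf{x}^r)=0$, $DF_i=\{d\in D\phi_i(\mathbf{x}^r):d\cdot v^*>0\}$ if $\phi_i(\mathbf{x}^r)<0$, and $\hat\nabla\phi_i(\mathbf{x}^r)=\arg\min_{d\in DF_i}\nabla J(\mathbf{x}^r)\cdot d/\|d\|$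 (with $d/\|d\|:=0$ if $d=0$). Convex feasible set: $\mathcal{F}_i(\mathbf{x}^r)=\Gamma_i$ if $\phi_i$ is concave; $\mathcal{F}_i(\mathbf{x}^r)=\{\mathbf{x}:\phi_i(\mathbf{x}^r)+\hat\nabla\phi_i(\mathbf{x}^r)(\mathbf{x}-\mathbf{x}^r)\ge0\}$ if $\phi_i$ is convex; $\mathcal{F}_i(\mathbf{x}^r)=\{\mathbf{x}:\phi_i(\mathbf{x}^r)+\hat\nabla\phi_i(\mathbf{x}^r)(\mathbf{x}-\mathbf{x}^r)\ge\frac12(\mathbf{x}-\mathbf{x}^r)^TH_i^*(\mathbf{x}-\mathbf{x}^r)\}$ otherwise; $\mathcal{F}(\mathbf{x}^r)=\bigcap_{i=1}^N\mathcal{F}_i(\mathbf{x}^r)$. *)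

theory Defs
  imports "HOL-Analysis.Analysis"
begin

definition pdiff :: "'n::finite \<Rightarrow> (real^'n \<Rightarrow> real) \<Rightarrow> real^'n \<Rightarrow> real" where
  "pdiff i f = (\<lambda>x. deriv (\<lambda>t. f (x + t *\<^sub>R axis i 1)) 0)"

fun iter_pdiff :: "'n::finite list \<Rightarrow> (real^'n \<Rightarrow> real) \<Rightarrow> real^'n \<Rightarrow> real" where
  "iter_pdiff [] f = f"
| "iter_pdiff (i # is) f = pdiff i (iter_pdiff is f)"

definition smooth_fun :: "(real^'n::finite \<Rightarrow> real) \<Rightarrow> bool" where
  "smooth_fun f \<longleftrightarrow> (\<forall>is. continuous_on UNIV (iter_pdiff is f) \<and>
     (\<forall>i x. (\<lambda>t. iter_pdiff is f (x + t *\<^sub>R axis i 1)) differentiable (at 0)))"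

definition strictly_convex :: "('a::real_vector \<Rightarrow> real) \<Rightarrow> bool" where
  "strictly_convex f \<longleftrightarrow> (\<forall>x y u. x \<noteq> y \<longrightarrow> 0 < u \<longrightarrow> u < 1 \<longrightarrow>
     f ((1 - u) *\<^sub>R x + u *\<^sub>R y) < (1 - u) * f x + u * f y)"

definition psd :: "real^'n^'n \<Rightarrow> bool" where
  "psd H \<longleftrightarrow> transpose H = H \<and> (\<forall>v. 0 \<le> v \<bullet> (H *v v))"

definition semi_convex_with :: "(real^'n \<Rightarrow> real) \<Rightarrow> real^'n^'n \<Rightarrow> bool" where
  "semi_convex_with f H \<longleftrightarrow> psd H \<and>
     (\<forall>x0. convex_on UNIV (\<lambda>x. f x + 1/2 * ((x - x0) \<bullet> (H *v (x - x0)))))"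

definition dirderiv :: "('a::real_normed_vector \<Rightarrow> real) \<Rightarrow> 'a \<Rightarrow> 'a \<Rightarrow> real" where
  "dirderiv f x v = Lim (at_right 0) (\<lambda>a. (f (x + a *\<^sub>R v) - f x) / a)"

definition subdiff :: "('a::real_inner \<Rightarrow> real) \<Rightarrow> 'a \<Rightarrow> 'a set" where
  "subdiff f x = {d. \<forall>v. d \<bullet> v \<le> dirderiv f x v}"

definition feasible_dirs :: "nat \<Rightarrow> (nat \<Rightarrow> real^'n \<Rightarrow> real) \<Rightarrow> real^'n \<Rightarrow> (real^'n) set" where
  "feasible_dirs N \<phi> xr = {v. norm v = 1 \<and> (\<forall>i<N.
      \<phi> i xr > 0 \<or>
      (\<phi> i xr = 0 \<and> (\<exists>d\<in>subdiff (\<phi> i) xr. v \<bullet> d \<ge> 0)) \<or>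
      (\<phi> i xr < 0 \<and> (\<exists>d\<in>subdiff (\<phi> i) xr. v \<bullet> d > 0)))}"

definition lex_le :: "(real, 'n::{finite,wellorder}) vec \<Rightarrow> (real, 'n::{finite,wellorder}) vec \<Rightarrow> bool" where
  "lex_le v w \<longleftrightarrow> v = w \<or> (\<exists>k. v $ k < w $ k \<and> (\<forall>j<k. v $ j = w $ j))"

definition is_opt_dir :: "(real, 'n::{finite,wellorder}) vec \<Rightarrow> ((real, 'n::{finite,wellorder}) vec) set \<Rightarrow> (real, 'n::{finite,wellorder}) vec \<Rightarrow> bool" where
  "is_opt_dir g C v \<longleftrightarrow> is_arg_min (\<lambda>w. g \<bullet> w) (\<lambda>w. w \<in> C) v \<and>
     (\<forall>w. is_arg_min (\<lambda>w. g \<bullet> w) (\<lambda>w. w \<in> C) w \<longrightarrow> lex_le v w)"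

definition DF :: "(real^'n \<Rightarrow> real) \<Rightarrow> real^'n \<Rightarrow> real^'n \<Rightarrow> (real^'n) set" where
  "DF f xr vs =
     (if f xr > 0 then subdiff f xr
      else if f xr = 0 then {d \<in> subdiff f xr. d \<bullet> vs \<ge> 0}
      else {d \<in> subdiff f xr. d \<bullet> vs > 0})"

text \<open>d is an optimal sub-gradient: minimiser of g \<bullet> (d/\<parallel>d\<parallel>) over DF
  (note that d scaled by inverse of its norm is 0 when d = 0).\<close>
definition is_opt_subgrad :: "real^'n \<Rightarrow> (real^'n \<Rightarrow> real) \<Rightarrow> real^'n \<Rightarrow> real^'n \<Rightarrow> real^'n \<Rightarrow> bool" where
  "is_opt_subgrad g f xr vs d \<longleftrightarrow>
     is_arg_min (\<lambda>d. g \<bullet> (d /\<^sub>R norm d)) (\<lambda>d. d \<in> DF f xr vs) d"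

definition CFS_i :: "(real^'n \<Rightarrow> real) \<Rightarrow> real^'n^'n \<Rightarrow> real^'n \<Rightarrow> real^'n \<Rightarrow> (real^'n) set" where
  "CFS_i f H gh xr =
     (if concave_on UNIV f then {x. f x \<ge> 0}
      else if convex_on UNIV f then {x. f xr + gh \<bullet> (x - xr) \<ge> 0}
      else {x. f xr + gh \<bullet> (x - xr) \<ge> 1/2 * ((x - xr) \<bullet> (H *v (x - xr)))})"

definition CFS :: "nat \<Rightarrow> (nat \<Rightarrow> real^'n \<Rightarrow> real) \<Rightarrow> (nat \<Rightarrow> real^'n^'n) \<Rightarrow> (nat \<Rightarrow> real^'n)
    \<Rightarrow> real^'n \<Rightarrow> (real^'n) set" where
  "CFS N \<phi> H gh xr = (\<Inter>i\<in>{..<N}. CFS_i (\<phi> i) (H i) (gh i) xr)"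

end

theory Submission imports Defs begin

text \<open>Suppose \<open>g \<bullet> v\<^sup>* < 0\<close>. Assumption (3) yields a direction \<open>w\<close> pointing strictly into
  every active constraint, and \<open>u = v\<^sup>* + \<delta> w\<close> is, for small \<open>\<delta> > 0\<close>, still a descent
  direction of \<open>J\<close> while having positive inner product with every active sub-gradient that
  makes a non-negative angle with \<open>v\<^sup>*\<close>, in particular with the chosen sub-gradients
  \<open>\<nabla>\<phi>\<^sub>i(x\<^sup>*)\<close>. Then every set \<open>\<F>\<^sub>i(x\<^sup>*)\<close> contains \<open>x\<^sup>* + t u\<close> for all small \<open>t > 0\<close>, where
  \<open>J < J(x\<^sup>*)\<close>, contradicting the fixed-point property. Hence \<open>g \<bullet> v \<ge> g \<bullet> v\<^sup>* \<ge> 0\<close> on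
  \<open>C(x\<^sup>*)\<close>.\<close>

lemma gderiv_eventually_descent_along_ray:
  fixes J :: "'a::real_inner \<Rightarrow> real"
  assumes "GDERIV J x :> g" "g \<bullet> u < 0"
  shows "eventually (\<lambda>t. J (x + t *\<^sub>R u) < J x) (at_right 0)"
proof -
  have ray: "((\<lambda>t::real. x + t *\<^sub>R u) has_derivative (\<lambda>t. t *\<^sub>R u)) (at 0)"
    by (auto intro!: derivative_eq_intros)
  have "(J has_derivative (\<lambda>h. g \<bullet> h)) (at (x + 0 *\<^sub>R u))"
    using assms(1) unfolding gderiv_def by (simp add: inner_commute)
  from diff_chain_at[OF ray this]
  have "((\<lambda>t. J (x + t *\<^sub>R u)) has_derivative (\<lambda>t. (g \<bullet> u) * t)) (at 0)"
    by (simp add: o_def algebra_simps)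
  hence "((\<lambda>t. J (x + t *\<^sub>R u)) has_real_derivative (g \<bullet> u)) (at 0)"
    unfolding has_field_derivative_def .
  from DERIV_neg_dec_right[OF this assms(2)] obtain d where "d > 0"
    "\<forall>h>0. h < d \<longrightarrow> J (x + (0 + h) *\<^sub>R u) < J (x + 0 *\<^sub>R u)" by auto
  thus ?thesis unfolding eventually_at_right_field by (intro exI[of _ d]) auto
qed

lemma continuous_eventually_pos_along_ray:
  fixes f :: "'a::real_normed_vector \<Rightarrow> real"
  assumes "continuous_on UNIV f" "f x > 0"
  shows "eventually (\<lambda>t. f (x + t *\<^sub>R u) > 0) (at_right 0)"
proof -
  have "continuous_on UNIV (\<lambda>t::real. f (x + t *\<^sub>R u))"
    by (rule continuous_on_compose2[OF assms(1)]) (auto intro!: continuous_intros)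
  hence "isCont (\<lambda>t. f (x + t *\<^sub>R u)) 0"
    by (simp add: continuous_on_eq_continuous_at)
  from isContD[OF this] have "((\<lambda>t. f (x + t *\<^sub>R u)) \<longlongrightarrow> f x) (at_right 0)"
    by (simp add: filterlim_at_split)
  thus ?thesis using assms(2) by (rule order_tendstoD(1))
qed

lemma concave_on_eventually_nonneg_along_ray:
  fixes f :: "'a::real_normed_vector \<Rightarrow> real"
  assumes concave: "concave_on UNIV f" and "f x = 0" and "dirderiv f x u > 0"
  shows "eventually (\<lambda>t. f (x + t *\<^sub>R u) \<ge> 0) (at_right 0)"
proof -
  have chord: "f (x + a *\<^sub>R u) \<ge> (a / b) * f (x + b *\<^sub>R u)" if "0 < a" "a \<le> b" for a b
  proof -
    have "x + a *\<^sub>R u = (1 - a/b) *\<^sub>R x + (a/b) *\<^sub>R (x + b *\<^sub>R u)"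
      using that by (simp add: algebra_simps)
    thus ?thesis using concave_onD[OF concave, of "a/b" x "x + b *\<^sub>R u"] that \<open>f x = 0\<close> by simp
  qed
  show ?thesis
  proof (cases "\<exists>b>0. f (x + b *\<^sub>R u) \<ge> 0")
    case True
    then obtain b where "b > 0" "f (x + b *\<^sub>R u) \<ge> 0" by auto
    hence "\<forall>a>0. a < b \<longrightarrow> f (x + a *\<^sub>R u) \<ge> 0"
      using chord by (meson less_imp_le order_trans divide_nonneg_pos mult_nonneg_nonneg)
    thus ?thesis unfolding eventually_at_right_field using \<open>b > 0\<close> by auto
  next
    case False
    define q where "q a = (f (x + a *\<^sub>R u) - f x) / a" for a
    \<comment> \<open>all difference quotients are negative and, by concavity, increase as \<open>a \<rightarrow> 0\<^sup>+\<close>;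
      so their limit, the directional derivative, is not positive\<close>
    have q_neg: "0 \<le> - q a" if "0 < a" for a
      using False that unfolding q_def \<open>f x = 0\<close> by (simp add: divide_nonpos_pos less_imp_le not_le)
    have q_mono: "- q a \<le> - q b" if "0 < a" "a \<le> b" for a b
    proof -
      have "f (x + a *\<^sub>R u) / a \<ge> f (x + b *\<^sub>R u) / b"
        using chord[OF that] that by (simp add: field_simps)
      thus ?thesis unfolding q_def \<open>f x = 0\<close> by simp
    qed
    define L where "L = Inf ((\<lambda>a. - q a) ` ({0<..} \<inter> UNIV))"
    have "((\<lambda>a. - q a) \<longlongrightarrow> L) (at 0 within ({0<..} \<inter> UNIV))"
      unfolding L_def by (rule Lim_right_bound[where K=0]) (use q_mono q_neg in auto)
    from tendsto_minus[OF this] have "(q \<longlongrightarrow> - L) (at_right 0)"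
      by simp
    hence "dirderiv f x u = - L"
      unfolding dirderiv_def q_def[abs_def] by (intro tendsto_Lim) auto
    moreover have "L \<ge> 0"
      unfolding L_def by (rule cINF_greatest) (use q_neg in force)+
    ultimately show ?thesis using assms(3) by simp
  qed
qed

lemma eventually_quadratic_le_at_right:
  fixes c a Q :: real
  assumes "c > 0 \<or> (c = 0 \<and> a > 0)"
  shows "eventually (\<lambda>t. c + t * a \<ge> 1/2 * (t * t * Q)) (at_right 0)"
proof (cases "c > 0")
  case True
  have "((\<lambda>t. c + t * a - 1/2 * (t * t * Q)) \<longlongrightarrow> c + 0 * a - 1/2 * (0 * 0 * Q)) (at_right 0)"
    by (intro tendsto_intros)
  hence "eventually (\<lambda>t. c + t * a - 1/2 * (t * t * Q) > 0) (at_right 0)"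
    using True by (auto dest: order_tendstoD(1)[where a=0])
  thus ?thesis by (rule eventually_mono) simp
next
  case False
  with assms have "c = 0" "a > 0" by auto
  have "((\<lambda>t. a - 1/2 * (t * Q)) \<longlongrightarrow> a - 1/2 * (0 * Q)) (at_right 0)"
    by (intro tendsto_intros)
  hence "eventually (\<lambda>t. a - 1/2 * (t * Q) > 0) (at_right 0)"
    using \<open>a > 0\<close> by (auto dest: order_tendstoD(1)[where a=0])
  moreover have "eventually (\<lambda>t::real. t > 0) (at_right 0)"
    by (simp add: eventually_at_right_less)
  ultimately show ?thesis
  proof (rule eventually_elim2)
    fix t :: real assume "a - 1/2 * (t * Q) > 0" "t > 0"
    hence "t * (a - 1/2 * (t * Q)) \<ge> 0" by simp
    thus "c + t * a \<ge> 1/2 * (t * t * Q)" using \<open>c = 0\<close> by (simp add: algebra_simps)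
  qed
qed

lemma eventually_ray_in_CFS_i:
  fixes f :: "real^'n \<Rightarrow> real"
  assumes "continuous_on UNIV f" "f x \<ge> 0"
    and active_subdiff: "f x = 0 \<Longrightarrow> \<exists>d\<in>subdiff f x. d \<bullet> u > 0"
    and active_gh: "\<not> concave_on UNIV f \<Longrightarrow> f x = 0 \<Longrightarrow> gh \<bullet> u > 0"
  shows "eventually (\<lambda>t. x + t *\<^sub>R u \<in> CFS_i f H gh x) (at_right 0)"
proof (cases "concave_on UNIV f")
  case True
  have "eventually (\<lambda>t. f (x + t *\<^sub>R u) \<ge> 0) (at_right 0)"
  proof (cases "f x > 0")
    case True
    from continuous_eventually_pos_along_ray[OF assms(1) this, of u] show ?thesis
      by (rule eventually_mono) simp
  next
    case False
    with assms(2) have "f x = 0" by simp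
    with active_subdiff obtain d where "d \<in> subdiff f x" "d \<bullet> u > 0" by auto
    moreover from \<open>d \<in> subdiff f x\<close> have "d \<bullet> u \<le> dirderiv f x u"
      unfolding subdiff_def by blast
    ultimately have "dirderiv f x u > 0" by linarith
    with concave_on_eventually_nonneg_along_ray[OF True \<open>f x = 0\<close>] show ?thesis .
  qed
  thus ?thesis unfolding CFS_i_def using True by simp
next
  case nonconcave: False
  have "f x > 0 \<or> (f x = 0 \<and> gh \<bullet> u > 0)"
    using assms(2) active_gh[OF nonconcave] by auto
  hence ev: "eventually (\<lambda>t. f x + t * (gh \<bullet> u) \<ge> 1/2 * (t * t * Q)) (at_right 0)" for Q
    by (rule eventually_quadratic_le_at_right)
  have linear: "gh \<bullet> (x + t *\<^sub>R u - x) = t * (gh \<bullet> u)"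
    and quadratic: "(x + t *\<^sub>R u - x) \<bullet> (H *v (x + t *\<^sub>R u - x)) = t * t * (u \<bullet> (H *v u))" for t
    by (simp_all add: matrix_vector_mult_scaleR)
  show ?thesis
  proof (cases "convex_on UNIV f")
    case True
    with ev[of 0] show ?thesis unfolding CFS_i_def using nonconcave by (simp add: linear)
  next
    case False
    with ev[of "u \<bullet> (H *v u)"] show ?thesis unfolding CFS_i_def using nonconcave
      by (simp only: linear quadratic if_False mem_Collect_eq)
  qed
qed

lemma eventually_ray_in_CFS:
  assumes "\<forall>i<N. continuous_on UNIV (\<phi> i)" "\<forall>i<N. \<phi> i x \<ge> 0"
    and "\<forall>i<N. \<phi> i x = 0 \<longrightarrow> (\<exists>d\<in>subdiff (\<phi> i) x. d \<bullet> u > 0)"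
    and "\<forall>i<N. \<not> concave_on UNIV (\<phi> i) \<longrightarrow> \<phi> i x = 0 \<longrightarrow> gh i \<bullet> u > 0"
  shows "eventually (\<lambda>t. x + t *\<^sub>R u \<in> CFS N \<phi> H gh x) (at_right 0)"
proof -
  have "\<forall>i\<in>{..<N}. eventually (\<lambda>t. x + t *\<^sub>R u \<in> CFS_i (\<phi> i) (H i) (gh i) x) (at_right 0)"
    using assms by (auto intro!: eventually_ray_in_CFS_i)
  thus ?thesis unfolding CFS_def by (simp add: eventually_ball_finite)
qed

lemma exists_strictly_inward_dir:
  assumes "{i. i < N \<and> \<phi> i x = 0} \<noteq> {} \<longrightarrow>
             (\<exists>v. \<forall>i<N. \<phi> i x = 0 \<longrightarrow> dirderiv (\<phi> i) x v < 0)"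
  shows "\<exists>w. \<forall>i<N. \<phi> i x = 0 \<longrightarrow> (\<forall>d\<in>subdiff (\<phi> i) x. d \<bullet> w > 0)"
proof (cases "{i. i < N \<and> \<phi> i x = 0} = {}")
  case False
  with assms obtain v where v: "\<forall>i<N. \<phi> i x = 0 \<longrightarrow> dirderiv (\<phi> i) x v < 0" by blast
  have "d \<bullet> - v > 0" if "i < N" "\<phi> i x = 0" "d \<in> subdiff (\<phi> i) x" for i d
  proof -
    have "d \<bullet> v \<le> dirderiv (\<phi> i) x v" using that(3) unfolding subdiff_def by blast
    thus ?thesis using v that(1,2) by force
  qed
  thus ?thesis by blast
qed auto

lemma exists_descent_dir_perturbation:
  fixes g v w :: "'a::real_inner"
  assumes "g \<bullet> v < 0" "\<forall>d\<in>D. d \<bullet> w > 0"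
  shows "\<exists>u. g \<bullet> u < 0 \<and> (\<forall>d\<in>D. d \<bullet> v \<ge> 0 \<longrightarrow> d \<bullet> u > 0)"
proof -
  define \<delta> where "\<delta> = - (g \<bullet> v) / (2 * (\<bar>g \<bullet> w\<bar> + 1))"
  have "\<delta> > 0" unfolding \<delta>_def using assms(1) by (intro divide_pos_pos) auto
  have "\<delta> * (g \<bullet> w) \<le> \<delta> * (\<bar>g \<bullet> w\<bar> + 1)"
    using \<open>\<delta> > 0\<close> by (intro mult_left_mono) auto
  also have "\<dots> = - (g \<bullet> v) / 2"
    unfolding \<delta>_def by (simp add: field_simps add_pos_nonneg)
  finally have "g \<bullet> (v + \<delta> *\<^sub>R w) < 0"
    using assms(1) by (simp add: inner_add_right)
  moreover have "d \<bullet> (v + \<delta> *\<^sub>R w) > 0" if "d \<in> D" "d \<bullet> v \<ge> 0" for d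
    using that assms(2) \<open>\<delta> > 0\<close> by (simp add: inner_add_right add_nonneg_pos)
  ultimately show ?thesis by blast
qed

lemma feasible_dirs_active_subgrad:
  assumes "v \<in> feasible_dirs N \<phi> x" "i < N" "\<phi> i x = 0"
  shows "\<exists>d\<in>subdiff (\<phi> i) x. d \<bullet> v \<ge> 0"
  using assms unfolding feasible_dirs_def by (auto simp: inner_commute)

lemma opt_subgrad_active:
  assumes "is_opt_subgrad g f x v d" "f x = 0"
  shows "d \<in> subdiff f x" "d \<bullet> v \<ge> 0"
  using assms unfolding is_opt_subgrad_def is_arg_min_def DF_def by auto

theorem proposition4p3:
  fixes J :: "(real, 'n::{finite,wellorder}) vec \<Rightarrow> real"
    and \<Gamma> :: "((real, 'n) vec) set"
    and N :: nat
    and \<phi> :: "nat \<Rightarrow> (real, 'n) vec \<Rightarrow> real"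
    and H :: "nat \<Rightarrow> ((real, 'n) vec, 'n) vec"
    and xs vs :: "(real, 'n) vec"
    and gh :: "nat \<Rightarrow> (real, 'n) vec"
    and g :: "(real, 'n) vec"
  assumes J_nonneg: "\<forall>x. J x \<ge> 0"
    and J_smooth: "smooth_fun J"
    and J_strict: "strictly_convex J"
    and \<Gamma>_conn: "connected \<Gamma>"
    and \<Gamma>_closed: "closed \<Gamma>"
    and \<Gamma>_polytopes: "\<forall>x\<in>\<Gamma>. \<exists>P. polytope P \<and> aff_dim P = int CARD('n) \<and> x \<in> P \<and> P \<subseteq> \<Gamma>"
    and \<Gamma>_decomp: "\<Gamma> = (\<Inter>i\<in>{..<N}. {x. \<phi> i x \<ge> 0})"
    and \<phi>_cont: "\<forall>i<N. continuous_on UNIV (\<phi> i)"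
    and \<phi>_semiconvex: "\<forall>i<N. semi_convex_with (\<phi> i) (H i)"
    and A1: "\<forall>i<N. \<forall>x. subdiff (\<phi> i) x \<noteq> {0}"
    and A2: "\<forall>i<N. \<forall>x. \<phi> i x = 0 \<longrightarrow> 0 \<notin> subdiff (\<phi> i) x"
    and A3: "\<forall>x. {i. i < N \<and> \<phi> i x = 0} \<noteq> {} \<longrightarrow>
               (\<exists>v. \<forall>i<N. \<phi> i x = 0 \<longrightarrow> dirderiv (\<phi> i) x v < 0)"
    and g_grad: "GDERIV J xs :> g"
    and xs_in: "xs \<in> \<Gamma>"
    and vs_opt: "is_opt_dir g (feasible_dirs N \<phi> xs) vs"
    and gh_opt: "\<forall>i<N. \<not> concave_on UNIV (\<phi> i) \<longrightarrow> is_opt_subgrad g (\<phi> i) xs vs (gh i)"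
    and fixed_point: "is_arg_min J (\<lambda>x. x \<in> CFS N \<phi> H gh xs) xs"
  shows "\<forall>v\<in>feasible_dirs N \<phi> xs. g \<bullet> v \<ge> 0"
proof -
  have vs_in: "vs \<in> feasible_dirs N \<phi> xs"
    and vs_min: "\<And>v. v \<in> feasible_dirs N \<phi> xs \<Longrightarrow> g \<bullet> vs \<le> g \<bullet> v"
    using vs_opt unfolding is_opt_dir_def is_arg_min_def by (auto simp: not_less)
  have xs_nonneg: "\<forall>i<N. \<phi> i xs \<ge> 0" using xs_in \<Gamma>_decomp by auto
  have "g \<bullet> vs \<ge> 0"
  proof (rule ccontr)
    assume "\<not> g \<bullet> vs \<ge> 0"
    define D where "D = (\<Union>i\<in>{i. i < N \<and> \<phi> i xs = 0}. subdiff (\<phi> i) xs)"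
    obtain w where "\<forall>d\<in>D. d \<bullet> w > 0"
      using exists_strictly_inward_dir[of N \<phi> xs] A3 unfolding D_def by blast
    with \<open>\<not> g \<bullet> vs \<ge> 0\<close> obtain u where "g \<bullet> u < 0" and u_in: "\<forall>d\<in>D. d \<bullet> vs \<ge> 0 \<longrightarrow> d \<bullet> u > 0"
      using exists_descent_dir_perturbation[of g vs D w] by auto
    have "\<forall>i<N. \<phi> i xs = 0 \<longrightarrow> (\<exists>d\<in>subdiff (\<phi> i) xs. d \<bullet> u > 0)"
      using feasible_dirs_active_subgrad[OF vs_in] u_in unfolding D_def by blast
    moreover have "\<forall>i<N. \<not> concave_on UNIV (\<phi> i) \<longrightarrow> \<phi> i xs = 0 \<longrightarrow> gh i \<bullet> u > 0"
      using opt_subgrad_active gh_opt u_in unfolding D_def by blast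
    ultimately have "eventually (\<lambda>t. xs + t *\<^sub>R u \<in> CFS N \<phi> H gh xs) (at_right 0)"
      using \<phi>_cont xs_nonneg by (intro eventually_ray_in_CFS)
    moreover have "eventually (\<lambda>t. J (xs + t *\<^sub>R u) < J xs) (at_right 0)"
      using gderiv_eventually_descent_along_ray[OF g_grad \<open>g \<bullet> u < 0\<close>] .
    ultimately obtain t where "xs + t *\<^sub>R u \<in> CFS N \<phi> H gh xs" "J (xs + t *\<^sub>R u) < J xs"
      using eventually_happens'[OF trivial_limit_at_right_real eventually_conj] by blast
    with fixed_point show False unfolding is_arg_min_def by blast
  qed
  thus ?thesis using vs_min by (meson order_trans)
qed

end
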